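(* For integers $1\le k\le n-1$, \[ l_k(n) = \tfrac12\,|\mathrm{Epi}(P_n,P_{n-k+1})|. \]
   Context: For a positive integer $m$, $P_m$ denotes the path with vertex set $[m]=\{1,\dots,m\}$ in which $i$ and $j$ are adjacent iff $|i-j|=1$; $\mathrm{Hom}(P_n,P_r)$ is the set of maps $f:[n]\to[r]$ with $|f(i)-f(i+1)|=1$ for $1\le i\le n-1$, and $\mathrm{Epi}(P_n,P_r)=\{f\in\mathrm{Hom}(P_n,P_r): f([n])=[r]\}$. An endomorphism of $P_n$ is an element of $\mathrm{Hom}(P_n,P_n)$; it induces the partition of $[n]$ whose blocks are its nonempty fibers. Let $\mathscr C(P_n)$ be the set of partitions of $[n]$ induced by endomorphisms of $P_n$, and for $1\le k\le n-1$ let $l_k(n)=|\{\rho\in\mathscr C(P_n): \rho \text{ has exactly } n-k+1 \text{ blocks}\}|$. *)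

theory Defs
  imports Complex_Main "HOL-Library.FuncSet"
begin

text \<open>Homomorphisms P_n -> P_r: maps [n] -> [r] (extensional, undefined outside [n])
  with |f(i) - f(i+1)| = 1 for 1 <= i <= n-1.\<close>
definition Hom :: "nat \<Rightarrow> nat \<Rightarrow> (nat \<Rightarrow> nat) set" where
  "Hom n r = {f \<in> {1..n} \<rightarrow>\<^sub>E {1..r}.
      \<forall>i. 1 \<le> i \<and> i \<le> n - 1 \<longrightarrow> \<bar>int (f i) - int (f (i+1))\<bar> = 1}"

definition Epi :: "nat \<Rightarrow> nat \<Rightarrow> (nat \<Rightarrow> nat) set" where
  "Epi n r = {f \<in> Hom n r. f ` {1..n} = {1..r}}"

definition induced_partition :: "nat \<Rightarrow> (nat \<Rightarrow> nat) \<Rightarrow> nat set set" where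
  "induced_partition n f = {{i \<in> {1..n}. f i = j} | j. j \<in> f ` {1..n}}"

definition C_P :: "nat \<Rightarrow> nat set set set" where
  "C_P n = induced_partition n ` Hom n n"

definition l :: "nat \<Rightarrow> nat \<Rightarrow> nat" where
  "l k n = card {\<rho> \<in> C_P n. card \<rho> = n - k + 1}"

end

theory Submission
  imports Defs
begin

(* Every endomorphism f of P_n has an interval {a..b} as image
   (a discrete intermediate value theorem); shifting values by 1 - a turns f
   into an epimorphism onto P_(b-a+1) inducing the same partition.  Hence the
   partitions in C(P_n) with r blocks are exactly the partitions induced by
   epimorphisms P_n -> P_r.  Conversely two epimorphisms g, h onto P_r induce
   the same partition iff h = g or h = r + 1 - g: the value relabelling
   g i |-> h i is a bijection of [r] taking adjacent values to adjacent values
   (every pair a, a+1 occurs along an edge of the path), and the only such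
   bijections are the identity and the reversal.  For r >= 2 these two maps
   differ, so each partition has exactly two epimorphisms above it, giving
   |Epi(P_n,P_r)| = 2 l_k(n) with r = n - k + 1.
   Shift and reversal are both handled by one lemma on relabelling the values
   of a homomorphism by a distance-preserving map. *)

section \<open>Induced partitions\<close>

lemma induced_partition_image:
  "induced_partition n f = (\<lambda>j. {i \<in> {1..n}. f i = j}) ` (f ` {1..n})"
  unfolding induced_partition_def by blast

lemma card_induced_partition: "card (induced_partition n f) = card (f ` {1..n})"
proof -
  have "inj_on (\<lambda>j. {i \<in> {1..n}. f i = j}) (f ` {1..n})"
    unfolding inj_on_def by blast
  then show ?thesis by (simp add: induced_partition_image card_image)
qed

lemma induced_partition_eq_iff:
  "induced_partition n f = induced_partition n g \<longleftrightarrow>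
   (\<forall>i\<in>{1..n}. \<forall>j\<in>{1..n}. f i = f j \<longleftrightarrow> g i = g j)"
proof -
  have by_point: "induced_partition n f = (\<lambda>i. {x \<in> {1..n}. f x = f i}) ` {1..n}" for f
    unfolding induced_partition_def by blast
  show ?thesis
  proof
    assume eq: "induced_partition n f = induced_partition n g"
    have block: "{x \<in> {1..n}. f x = f i} = {x \<in> {1..n}. g x = g i}" if i: "i \<in> {1..n}" for i
    proof -
      have "{x \<in> {1..n}. f x = f i} \<in> induced_partition n f"
        unfolding by_point using i by blast
      then have "{x \<in> {1..n}. f x = f i} \<in> induced_partition n g" by (simp only: eq)
      then obtain j where j: "{x \<in> {1..n}. f x = f i} = {x \<in> {1..n}. g x = g j}"
        by (auto simp: by_point)
      moreover have "g i = g j" using j[THEN equalityD1, THEN subsetD, of i] i by simp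
      ultimately show ?thesis by simp
    qed
    show "\<forall>i\<in>{1..n}. \<forall>j\<in>{1..n}. f i = f j \<longleftrightarrow> g i = g j"
    proof (intro ballI)
      fix i j assume i: "i \<in> {1..n}" and j: "j \<in> {1..n}"
      have "j \<in> {x \<in> {1..n}. f x = f i} \<longleftrightarrow> j \<in> {x \<in> {1..n}. g x = g i}"
        using block[OF i] by simp
      then show "f i = f j \<longleftrightarrow> g i = g j" using j by auto
    qed
  next
    assume "\<forall>i\<in>{1..n}. \<forall>j\<in>{1..n}. f i = f j \<longleftrightarrow> g i = g j"
    then have "\<And>i. i \<in> {1..n} \<Longrightarrow> {x \<in> {1..n}. f x = f i} = {x \<in> {1..n}. g x = g i}"
      by auto
    then show "induced_partition n f = induced_partition n g"
      unfolding by_point by (rule image_cong[OF refl])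
  qed
qed

lemma Hom_step: "f \<in> Hom n m \<Longrightarrow> 1 \<le> i \<Longrightarrow> i < n \<Longrightarrow> \<bar>int (f i) - int (f (i+1))\<bar> = 1"
  unfolding Hom_def by auto

lemma Hom_range: "f \<in> Hom n m \<Longrightarrow> i \<in> {1..n} \<Longrightarrow> f i \<in> {1..m}"
  unfolding Hom_def by auto

lemma Hom_extensional: "f \<in> Hom n m \<Longrightarrow> i \<notin> {1..n} \<Longrightarrow> f i = undefined"
  unfolding Hom_def by (auto simp: PiE_def extensional_def)

lemma finite_Epi: "finite (Epi n r)"
proof (rule finite_subset)
  show "Epi n r \<subseteq> {1..n} \<rightarrow>\<^sub>E {1..r}" unfolding Epi_def Hom_def by auto
  show "finite ({1..n} \<rightarrow>\<^sub>E {1..(r::nat)})" by (intro finite_PiE) auto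
qed

lemma Hom_relabel:
  assumes f: "f \<in> Hom n m"
    and into: "\<And>x. x \<in> f ` {1..n} \<Longrightarrow> \<phi> x \<in> {1..r}"
    and isometric: "\<And>x y. x \<in> f ` {1..n} \<Longrightarrow> y \<in> f ` {1..n} \<Longrightarrow>
                      \<bar>int (\<phi> x) - int (\<phi> y)\<bar> = \<bar>int x - int y\<bar>"
  shows "restrict (\<phi> \<circ> f) {1..n} \<in> Hom n r"
    and "restrict (\<phi> \<circ> f) {1..n} ` {1..n} = \<phi> ` f ` {1..n}"
    and "induced_partition n (restrict (\<phi> \<circ> f) {1..n}) = induced_partition n f"
proof -
  let ?g = "restrict (\<phi> \<circ> f) {1..n}"
  have "?g \<in> {1..n} \<rightarrow>\<^sub>E {1..r}" using into by auto
  moreover have "\<bar>int (?g i) - int (?g (i+1))\<bar> = 1" if "1 \<le> i" "i \<le> n - 1" for i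
    using that isometric[of "f i" "f (i+1)"] Hom_step[OF f, of i] by auto
  ultimately show "?g \<in> Hom n r" unfolding Hom_def by blast
  show "?g ` {1..n} = \<phi> ` f ` {1..n}" by auto
  have "\<phi> (f i) = \<phi> (f j) \<longleftrightarrow> f i = f j" if "i \<in> {1..n}" "j \<in> {1..n}" for i j
    using that isometric[of "f i" "f j"] by auto
  then show "induced_partition n ?g = induced_partition n f"
    unfolding induced_partition_eq_iff by simp
qed

section \<open>The image of a homomorphism is an interval\<close>

lemma Hom_intermediate_value:
  assumes f: "f \<in> Hom n m" and "1 \<le> i" "i \<le> j" "j \<le> n"
    and "min (f i) (f j) \<le> v" "v \<le> max (f i) (f j)"
  shows "\<exists>t\<in>{i..j}. f t = v"
  using assms(3-)
proof (induction j rule: dec_induct)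
  case base
  then show ?case by auto
next
  case (step j)
  have unit: "\<bar>int (f j) - int (f (j+1))\<bar> = 1" using Hom_step[OF f, of j] step assms(2) by simp
  show ?case
  proof (cases "min (f i) (f j) \<le> v \<and> v \<le> max (f i) (f j)")
    case True
    with step obtain t where "t \<in> {i..j}" "f t = v" by auto
    then show ?thesis by (intro bexI[of _ t]) auto
  next
    case False
    then have "v = f (Suc j)" using step.prems unit by (simp add: min_def max_def split: if_splits)
    then show ?thesis using step by (intro bexI[of _ "Suc j"]) auto
  qed
qed

lemma Hom_image_interval:
  assumes f: "f \<in> Hom n m" and n: "n \<ge> 1"
  shows "f ` {1..n} = {Min (f ` {1..n})..Max (f ` {1..n})}"
proof
  show "f ` {1..n} \<subseteq> {Min (f ` {1..n})..Max (f ` {1..n})}" by auto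
  show "{Min (f ` {1..n})..Max (f ` {1..n})} \<subseteq> f ` {1..n}"
  proof
    fix v assume v: "v \<in> {Min (f ` {1..n})..Max (f ` {1..n})}"
    have ne: "f ` {1..n} \<noteq> {}" using n by auto
    obtain p where p: "p \<in> {1..n}" "f p = Min (f ` {1..n})" using Min_in[OF _ ne] by auto
    obtain q where q: "q \<in> {1..n}" "f q = Max (f ` {1..n})" using Max_in[OF _ ne] by auto
    have "f p \<le> f q" using p q v by simp
    then have "min (f (min p q)) (f (max p q)) = f p" "max (f (min p q)) (f (max p q)) = f q"
      by (cases "p \<le> q"; simp add: min.absorb1 min.absorb2 max.absorb1 max.absorb2)+
    moreover have "1 \<le> min p q" "min p q \<le> max p q" "max p q \<le> n" using p q by auto
    ultimately obtain t where t: "t \<in> {min p q..max p q}" "f t = v"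
      using Hom_intermediate_value[OF f, of "min p q" "max p q" v] p q v by auto
    then have "t \<in> {1..n}" using p(1) q(1) by (auto simp: min_def max_def split: if_splits)
    then show "v \<in> f ` {1..n}" using t(2) by blast
  qed
qed

lemma Hom_normalise:
  assumes f: "f \<in> Hom n m" and n: "n \<ge> 1"
  shows "\<exists>g \<in> Epi n (card (f ` {1..n})). induced_partition n g = induced_partition n f"
proof -
  define a where "a = Min (f ` {1..n})"
  define b where "b = Max (f ` {1..n})"
  have image: "f ` {1..n} = {a..b}" using Hom_image_interval[OF f n] by (simp add: a_def b_def)
  let ?\<phi> = "\<lambda>x. x + 1 - a" and ?r = "b + 1 - a"
  have into: "?\<phi> x \<in> {1..?r}" if "x \<in> f ` {1..n}" for x using that image by auto
  have isometric: "\<bar>int (?\<phi> x) - int (?\<phi> y)\<bar> = \<bar>int x - int y\<bar>"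
    if "x \<in> f ` {1..n}" "y \<in> f ` {1..n}" for x y using that image by auto
  have "?\<phi> ` {a..b} = {1..?r}"
  proof
    show "{1..?r} \<subseteq> ?\<phi> ` {a..b}"
    proof
      fix y assume "y \<in> {1..?r}"
      then have "y + a - 1 \<in> {a..b}" "y = ?\<phi> (y + a - 1)" by auto
      then show "y \<in> ?\<phi> ` {a..b}" by blast
    qed
  qed auto
  then have "restrict (?\<phi> \<circ> f) {1..n} \<in> Epi n ?r"
    using Hom_relabel(1,2)[OF f into isometric] image unfolding Epi_def by auto
  moreover have "card (f ` {1..n}) = ?r" using image by simp
  ultimately show ?thesis using Hom_relabel(3)[OF f into isometric] by auto
qed

lemma Epi_in_Hom: "g \<in> Epi n r \<Longrightarrow> r \<le> n \<Longrightarrow> g \<in> Hom n n"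
  unfolding Epi_def Hom_def by (auto simp: PiE_iff)

lemma partitions_with_r_blocks:
  assumes "r \<le> n" "1 \<le> r"
  shows "{\<rho> \<in> C_P n. card \<rho> = r} = induced_partition n ` Epi n r"
proof
  show "{\<rho> \<in> C_P n. card \<rho> = r} \<subseteq> induced_partition n ` Epi n r"
  proof
    fix \<rho> assume "\<rho> \<in> {\<rho> \<in> C_P n. card \<rho> = r}"
    then obtain f where f: "f \<in> Hom n n" "\<rho> = induced_partition n f" "card (f ` {1..n}) = r"
      unfolding C_P_def by (auto simp: card_induced_partition)
    moreover have "n \<ge> 1" using assms by simp
    ultimately show "\<rho> \<in> induced_partition n ` Epi n r"
      using Hom_normalise[OF f(1)] by (metis image_eqI)
  qed
  show "induced_partition n ` Epi n r \<subseteq> {\<rho> \<in> C_P n. card \<rho> = r}"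
    using assms Epi_in_Hom unfolding C_P_def by (auto simp: card_induced_partition Epi_def)
qed

section \<open>Epimorphisms with the same partition\<close>

lemma path_invariant:
  fixes Q :: "nat \<Rightarrow> bool" and n :: nat
  assumes "\<forall>i. 1 \<le> i \<and> i < n \<longrightarrow> (Q i \<longleftrightarrow> Q (i+1))"
  shows "i \<in> {1..n} \<Longrightarrow> Q i \<longleftrightarrow> Q 1"
proof (induction i)
  case (Suc i)
  then show ?case using assms by (cases "i = 0") auto
qed simp

lemma Epi_covers_edge:
  assumes g: "g \<in> Epi n r" and a: "1 \<le> a" "a < r"
  shows "\<exists>i. 1 \<le> i \<and> i < n \<and> {g i, g (i+1)} = {a, a+1}"
proof (rule ccontr)
  assume no_edge: "\<not> ?thesis"
  have gh: "g \<in> Hom n r" and im: "g ` {1..n} = {1..r}" using g unfolding Epi_def by auto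
  have "\<forall>i. 1 \<le> i \<and> i < n \<longrightarrow> (g i \<le> a \<longleftrightarrow> g (i+1) \<le> a)"
  proof (intro allI impI)
    fix i assume i: "1 \<le> i \<and> i < n"
    have "\<bar>int (g i) - int (g (i+1))\<bar> = 1" using Hom_step[OF gh] i by auto
    moreover have "{g i, g (i+1)} \<noteq> {a, a+1}" using no_edge i by blast
    ultimately show "g i \<le> a \<longleftrightarrow> g (i+1) \<le> a" by (auto simp: doubleton_eq_iff)
  qed
  note below = path_invariant[of n "\<lambda>i. g i \<le> a", OF this]
  obtain p where "p \<in> {1..n}" "g p = a" using im a by (metis atLeastAtMost_iff imageE less_imp_le)
  moreover obtain q where "q \<in> {1..n}" "g q = a + 1" using im a
    by (metis Suc_eq_plus1 Suc_leI atLeastAtMost_iff imageE le_add2 le_trans)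
  ultimately show False using below[of p] below[of q] by simp
qed

lemma unit_steps_constant:
  fixes \<sigma> :: "nat \<Rightarrow> nat"
  assumes inj: "inj_on \<sigma> {1..r}"
    and unit: "\<forall>a. 1 \<le> a \<and> a < r \<longrightarrow> \<bar>int (\<sigma> a) - int (\<sigma> (a+1))\<bar> = 1"
  shows "1 \<le> a \<Longrightarrow> a < r \<Longrightarrow> int (\<sigma> (a+1)) - int (\<sigma> a) = int (\<sigma> 2) - int (\<sigma> 1)"
proof (induction a rule: dec_induct)
  case base
  then show ?case by (simp add: numeral_2_eq_2)
next
  case (step a)
  have "\<sigma> a \<noteq> \<sigma> (a+2)"
    using inj_onD[OF inj, of a "a+2"] step by auto
  then show ?case using step unit[rule_format, of a] unit[rule_format, of "a+1"]
    by (auto simp: abs_if split: if_splits)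
qed

lemma path_automorphism:
  fixes \<sigma> :: "nat \<Rightarrow> nat"
  assumes inj: "inj_on \<sigma> {1..r}" and into: "\<sigma> ` {1..r} \<subseteq> {1..r}"
    and unit: "\<forall>a. 1 \<le> a \<and> a < r \<longrightarrow> \<bar>int (\<sigma> a) - int (\<sigma> (a+1))\<bar> = 1"
  shows "(\<forall>a\<in>{1..r}. \<sigma> a = a) \<or> (\<forall>a\<in>{1..r}. \<sigma> a = r + 1 - a)"
proof (cases "r \<le> 1")
  case True
  then show ?thesis using into by auto
next
  case False
  define s where "s = int (\<sigma> 2) - int (\<sigma> 1)"
  have linear: "int (\<sigma> a) = int (\<sigma> 1) + s * (int a - 1)" if "1 \<le> a" "a \<le> r" for a
    using that
  proof (induction a rule: dec_induct)
    case (step a)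
    then show ?case using unit_steps_constant[OF inj unit, of a] by (simp add: s_def algebra_simps)
  qed simp
  have "s = 1 \<or> s = -1" using unit[rule_format, of 1] False by (auto simp: s_def numeral_2_eq_2)
  moreover have "\<sigma> 1 \<in> {1..r}" "\<sigma> r \<in> {1..r}" using into False by (auto simp: image_subset_iff)
  ultimately have "s = 1 \<and> \<sigma> 1 = 1 \<or> s = -1 \<and> \<sigma> 1 = r"
    using linear[of r] False by auto
  then show ?thesis
  proof
    assume "s = 1 \<and> \<sigma> 1 = 1"
    then show ?thesis using linear by auto
  next
    assume "s = -1 \<and> \<sigma> 1 = r"
    then have "\<forall>a\<in>{1..r}. int (\<sigma> a) = int r + 1 - int a" using linear by auto
    then show ?thesis by auto
  qed
qed

definition reverse_values :: "nat \<Rightarrow> nat \<Rightarrow> (nat \<Rightarrow> nat) \<Rightarrow> (nat \<Rightarrow> nat)" where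
  "reverse_values n r g = restrict (\<lambda>i. r + 1 - g i) {1..n}"

lemma reverse_values_Epi:
  assumes g: "g \<in> Epi n r"
  shows "reverse_values n r g \<in> Epi n r"
    and "induced_partition n (reverse_values n r g) = induced_partition n g"
proof -
  have gh: "g \<in> Hom n r" and im: "g ` {1..n} = {1..r}" using g unfolding Epi_def by auto
  let ?\<phi> = "\<lambda>x. r + 1 - x"
  have into: "?\<phi> x \<in> {1..r}" if "x \<in> g ` {1..n}" for x using that im by auto
  have isometric: "\<bar>int (?\<phi> x) - int (?\<phi> y)\<bar> = \<bar>int x - int y\<bar>"
    if "x \<in> g ` {1..n}" "y \<in> g ` {1..n}" for x y using that im by auto
  have rev: "reverse_values n r g = restrict (?\<phi> \<circ> g) {1..n}"
    unfolding reverse_values_def by (simp add: comp_def)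
  have "?\<phi> ` {1..r} = {1..r}"
  proof
    show "{1..r} \<subseteq> ?\<phi> ` {1..r}"
    proof
      fix y assume "y \<in> {1..r}"
      then have "?\<phi> y \<in> {1..r}" "y = ?\<phi> (?\<phi> y)" by auto
      then show "y \<in> ?\<phi> ` {1..r}" by blast
    qed
  qed auto
  then show "reverse_values n r g \<in> Epi n r"
    using Hom_relabel(1,2)[OF gh into isometric] im unfolding Epi_def rev by auto
  show "induced_partition n (reverse_values n r g) = induced_partition n g"
    using Hom_relabel(3)[OF gh into isometric] rev by simp
qed

lemma reverse_values_ne:
  assumes g: "g \<in> Epi n r" and r: "r \<ge> 2"
  shows "reverse_values n r g \<noteq> g"
proof
  assume eq: "reverse_values n r g = g"
  obtain p where p: "p \<in> {1..n}" "g p = 1" using g r unfolding Epi_def by force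
  then have "reverse_values n r g p = r" unfolding reverse_values_def by auto
  then show False using eq p r by simp
qed

lemma same_partition_Epi:
  assumes g: "g \<in> Epi n r" and h: "h \<in> Epi n r"
    and same: "induced_partition n h = induced_partition n g"
  shows "h = g \<or> h = reverse_values n r g"
proof -
  have gh: "g \<in> Hom n r" and gim: "g ` {1..n} = {1..r}" using g unfolding Epi_def by auto
  have hh: "h \<in> Hom n r" and him: "h ` {1..n} = {1..r}" using h unfolding Epi_def by auto
  have kernel: "\<forall>i\<in>{1..n}. \<forall>j\<in>{1..n}. h i = h j \<longleftrightarrow> g i = g j"
    using same induced_partition_eq_iff by blast
  define \<sigma> where "\<sigma> v = h (SOME i. i \<in> {1..n} \<and> g i = v)" for v
  have \<sigma>_g: "\<sigma> (g i) = h i" if "i \<in> {1..n}" for i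
  proof -
    have "\<exists>j. j \<in> {1..n} \<and> g j = g i" using that by blast
    from someI_ex[OF this] show ?thesis unfolding \<sigma>_def using kernel that by blast
  qed
  have into: "\<sigma> ` {1..r} \<subseteq> {1..r}"
  proof
    fix y assume "y \<in> \<sigma> ` {1..r}"
    then obtain v where "v \<in> {1..r}" "y = \<sigma> v" by blast
    moreover from this(1) obtain i where "i \<in> {1..n}" "g i = v" using gim by (metis imageE)
    ultimately have "i \<in> {1..n}" "y = \<sigma> (g i)" by auto
    then show "y \<in> {1..r}" using \<sigma>_g him by auto
  qed
  have inj: "inj_on \<sigma> {1..r}"
  proof (rule inj_onI)
    fix v w assume "v \<in> {1..r}" "w \<in> {1..r}" and eq: "\<sigma> v = \<sigma> w"
    then obtain i j where i: "i \<in> {1..n}" "g i = v" and j: "j \<in> {1..n}" "g j = w"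
      using gim by (metis imageE)
    then have "h i = h j" using eq \<sigma>_g by metis
    then show "v = w" using kernel i j by blast
  qed
  have unit: "\<forall>a. 1 \<le> a \<and> a < r \<longrightarrow> \<bar>int (\<sigma> a) - int (\<sigma> (a+1))\<bar> = 1"
  proof (intro allI impI)
    fix a assume "1 \<le> a \<and> a < r"
    then obtain i where i: "1 \<le> i" "i < n" "{g i, g (i+1)} = {a, a+1}"
      using Epi_covers_edge[OF g] by blast
    have "\<bar>int (h i) - int (h (i+1))\<bar> = 1" using Hom_step[OF hh i(1,2)] .
    moreover have "\<sigma> (g i) = h i" "\<sigma> (g (i+1)) = h (i+1)" using \<sigma>_g i by auto
    ultimately show "\<bar>int (\<sigma> a) - int (\<sigma> (a+1))\<bar> = 1" using i(3)
      by (auto simp: doubleton_eq_iff)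
  qed
  have outside: "h i = g i" "h i = reverse_values n r g i" if "i \<notin> {1..n}" for i
    using that Hom_extensional[OF gh] Hom_extensional[OF hh] by (auto simp: reverse_values_def)
  have gr: "i \<in> {1..n} \<Longrightarrow> g i \<in> {1..r}" for i using Hom_range[OF gh] by auto
  from path_automorphism[OF inj into unit] show ?thesis
  proof
    assume "\<forall>a\<in>{1..r}. \<sigma> a = a"
    then have "h i = g i" for i using \<sigma>_g gr outside by (cases "i \<in> {1..n}") (metis, simp)
    then show ?thesis by auto
  next
    assume "\<forall>a\<in>{1..r}. \<sigma> a = r + 1 - a"
    then have "h i = reverse_values n r g i" for i
      using \<sigma>_g gr outside by (cases "i \<in> {1..n}") (simp_all add: reverse_values_def)
    then show ?thesis by auto
  qed
qed

lemma card_Epi_twice_partitions: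
  assumes r: "r \<ge> 2"
  shows "card (Epi n r) = 2 * card (induced_partition n ` Epi n r)"
proof -
  let ?E = "Epi n r" and ?P = "induced_partition n ` Epi n r"
  let ?fiber = "\<lambda>\<rho>. {g \<in> ?E. induced_partition n g = \<rho>}"
  have two: "card (?fiber \<rho>) = 2" if "\<rho> \<in> ?P" for \<rho>
  proof -
    from that obtain g where g: "g \<in> ?E" "\<rho> = induced_partition n g" by blast
    have "?fiber \<rho> = {g, reverse_values n r g}"
      using same_partition_Epi[OF g(1)] reverse_values_Epi[OF g(1)] g by auto
    then show ?thesis using reverse_values_ne[OF g(1) r] by auto
  qed
  have "card ?E = card (\<Union>\<rho>\<in>?P. ?fiber \<rho>)" by (rule arg_cong[of _ _ card]) auto
  also have "\<dots> = (\<Sum>\<rho>\<in>?P. card (?fiber \<rho>))"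
    by (rule card_UN_disjoint) (use finite_Epi in auto)
  also have "\<dots> = 2 * card ?P" using two by simp
  finally show ?thesis .
qed

theorem mainTheorem8:
  fixes k n :: nat
  assumes "1 \<le> k" and "k \<le> n - 1"
  shows "real (l k n) = (1/2) * real (card (Epi n (n - k + 1)))"
proof -
  let ?r = "n - k + 1"
  have r: "?r \<le> n" "1 \<le> ?r" "2 \<le> ?r" using assms by auto
  have "l k n = card (induced_partition n ` Epi n ?r)"
    unfolding l_def partitions_with_r_blocks[OF r(1,2)] ..
  moreover have "card (Epi n ?r) = 2 * card (induced_partition n ` Epi n ?r)"
    using card_Epi_twice_partitions[OF r(3), of n] .
  ultimately show ?thesis by simp
qed

end
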